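(* Let $G$ be a connected graph with $n$ vertices, $m$ edges, chromatic number $\chi$ and independence number $\theta$. If $0\leq \alpha < 1$, then $$S_{\chi}(A_{\alpha}(G))\geq \frac{2\alpha m}{\theta}.$$
   Context: All graphs are simple and undirected. $A_{\alpha}(G)=\alpha D(G)+(1-\alpha)A(G)$, where $A(G)$ is the adjacency matrix and $D(G)$ the diagonal degree matrix. For a real symmetric matrix $M$ with eigenvalues $\lambda_1(M)\geq\cdots\geq\lambda_n(M)$, $S_k(M)=\sum_{i=1}^k\lambda_i(M)$. The independence number is the maximum size of a set of pairwise non-adjacent vertices. *)

theory Defs
  imports "Jordan_Normal_Form.Char_Poly"
begin

definition simple_graph :: "nat \<Rightarrow> (nat \<Rightarrow> nat \<Rightarrow> bool) \<Rightarrow> bool" where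
  "simple_graph n E \<longleftrightarrow> (\<forall>i j. E i j \<longrightarrow> i < n \<and> j < n) \<and> (\<forall>i j. E i j \<longrightarrow> E j i) \<and> (\<forall>i. \<not> E i i)"

definition graph_connected :: "nat \<Rightarrow> (nat \<Rightarrow> nat \<Rightarrow> bool) \<Rightarrow> bool" where
  "graph_connected n E \<longleftrightarrow> (\<forall>i<n. \<forall>j<n. E\<^sup>*\<^sup>* i j)"

definition num_edges :: "nat \<Rightarrow> (nat \<Rightarrow> nat \<Rightarrow> bool) \<Rightarrow> nat" where
  "num_edges n E = card {{i, j} | i j. i < n \<and> j < n \<and> E i j}"

definition degree :: "nat \<Rightarrow> (nat \<Rightarrow> nat \<Rightarrow> bool) \<Rightarrow> nat \<Rightarrow> nat" where
  "degree n E i = card {j. j < n \<and> E i j}"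

definition adj_matrix :: "nat \<Rightarrow> (nat \<Rightarrow> nat \<Rightarrow> bool) \<Rightarrow> real mat" where
  "adj_matrix n E = mat n n (\<lambda>(i, j). if E i j then 1 else 0)"

definition deg_matrix :: "nat \<Rightarrow> (nat \<Rightarrow> nat \<Rightarrow> bool) \<Rightarrow> real mat" where
  "deg_matrix n E = mat n n (\<lambda>(i, j). if i = j then real (degree n E i) else 0)"

definition A_alpha :: "real \<Rightarrow> nat \<Rightarrow> (nat \<Rightarrow> nat \<Rightarrow> bool) \<Rightarrow> real mat" where
  "A_alpha \<alpha> n E = \<alpha> \<cdot>\<^sub>m deg_matrix n E + (1 - \<alpha>) \<cdot>\<^sub>m adj_matrix n E"

definition proper_colouring :: "nat \<Rightarrow> (nat \<Rightarrow> nat \<Rightarrow> bool) \<Rightarrow> nat \<Rightarrow> (nat \<Rightarrow> nat) \<Rightarrow> bool" where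
  "proper_colouring n E k c \<longleftrightarrow> (\<forall>i<n. c i < k) \<and> (\<forall>i j. E i j \<longrightarrow> c i \<noteq> c j)"

definition chromatic_number :: "nat \<Rightarrow> (nat \<Rightarrow> nat \<Rightarrow> bool) \<Rightarrow> nat" where
  "chromatic_number n E = (LEAST k. \<exists>c. proper_colouring n E k c)"

definition independent_set :: "nat \<Rightarrow> (nat \<Rightarrow> nat \<Rightarrow> bool) \<Rightarrow> nat set \<Rightarrow> bool" where
  "independent_set n E S \<longleftrightarrow> S \<subseteq> {0..<n} \<and> (\<forall>i\<in>S. \<forall>j\<in>S. \<not> E i j)"

definition independence_number :: "nat \<Rightarrow> (nat \<Rightarrow> nat \<Rightarrow> bool) \<Rightarrow> nat" where
  "independence_number n E = Max (card ` {S. independent_set n E S})"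

text \<open>For a real symmetric matrix these are all
  its eigenvalues.\<close>

definition eigenvalues_desc :: "real mat \<Rightarrow> real list" where
  "eigenvalues_desc M = rev (sorted_list_of_multiset (proots (char_poly M)))"

definition S_k :: "nat \<Rightarrow> real mat \<Rightarrow> real" where
  "S_k k M = sum_list (take k (eigenvalues_desc M))"

end

theory Submission
  imports Defs "Jordan_Normal_Form.Schur_Decomposition"
begin

text \<open>The eigenvalues of the symmetric matrix A_alpha(G) are real, and the \<chi> largest of them
  have at least the average of all n eigenvalues, so S_\<chi> \<ge> (\<chi>/n) tr A_alpha(G) = 2\<alpha>m\<chi>/n.
  The colour classes of a proper \<chi>-colouring are independent sets, so n \<le> \<chi>\<theta>, which gives
  \<chi>/n \<ge> 1/\<theta>.\<close>

definition trace_mat :: "'a::comm_ring_1 mat \<Rightarrow> 'a" where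
  "trace_mat A = (\<Sum>i<dim_row A. A $$ (i, i))"

lemma trace_mat_eq_sum_list_diag_mat: "trace_mat A = sum_list (diag_mat A)"
  by (simp add: trace_mat_def diag_mat_def sum_list_sum_nth lessThan_atLeast0)

lemma trace_mat_mult_comm:
  assumes "X \<in> carrier_mat n m" "Y \<in> carrier_mat m n"
  shows "trace_mat (X * Y) = trace_mat (Y * X)"
proof -
  have "trace_mat (X * Y) = (\<Sum>i<n. \<Sum>k<m. X $$ (i, k) * Y $$ (k, i))"
    using assms by (auto simp: trace_mat_def scalar_prod_def lessThan_atLeast0 intro!: sum.cong)
  also have "\<dots> = (\<Sum>k<m. \<Sum>i<n. Y $$ (k, i) * X $$ (i, k))"
    by (subst sum.swap) (simp add: mult.commute)
  also have "\<dots> = trace_mat (Y * X)"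
    using assms by (auto simp: trace_mat_def scalar_prod_def lessThan_atLeast0 intro!: sum.cong)
  finally show ?thesis .
qed

lemma trace_mat_similar:
  assumes "similar_mat A B"
  shows "trace_mat A = trace_mat B"
proof -
  obtain n P Q where carrier: "{A, B, P, Q} \<subseteq> carrier_mat n n"
    and QP: "Q * P = 1\<^sub>m n" and A: "A = P * B * Q"
    using similar_matD[OF assms] by blast
  have "A = P * (B * Q)"
    using A carrier by auto
  then have "trace_mat A = trace_mat (P * (B * Q))"
    by simp
  also have "\<dots> = trace_mat (B * Q * P)"
    using carrier by (intro trace_mat_mult_comm) auto
  also have "B * Q * P = B"
    using carrier QP by (auto simp: assoc_mult_mat[of B n n Q n P n])
  finally show ?thesis .
qed

lemma trace_mat_eq_sum_list_char_poly_roots: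
  fixes A :: "'a::conjugatable_ordered_field mat"
  assumes "A \<in> carrier_mat n n" and "char_poly A = (\<Prod>e\<leftarrow>es. [:- e, 1:])"
  shows "trace_mat A = sum_list es"
proof -
  obtain B P Q where "schur_decomposition A es = (B, P, Q)"
    by (cases "schur_decomposition A es") auto
  from schur_decomposition[OF assms this]
  have "similar_mat A B" and "diag_mat B = es"
    by (auto simp: similar_mat_def)
  then show ?thesis
    by (metis trace_mat_similar trace_mat_eq_sum_list_diag_mat)
qed

lemma real_symmetric_complex_eigenvalue_real:
  fixes A :: "real mat"
  assumes A: "A \<in> carrier_mat n n" and sym: "transpose_mat A = A"
    and eig: "eigenvalue (map_mat complex_of_real A) a"
  shows "a \<in> \<real>"
proof -
  define Ac where "Ac = map_mat complex_of_real A"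
  have Ac: "Ac \<in> carrier_mat n n" using A by (simp add: Ac_def)
  obtain v where v: "v \<in> carrier_vec n" "v \<noteq> 0\<^sub>v n" and Av: "Ac *\<^sub>v v = a \<cdot>\<^sub>v v"
    using eig Ac unfolding Ac_def[symmetric] eigenvalue_def eigenvector_def by auto
  have A_sym: "A $$ (i, j) = A $$ (j, i)" if "i < n" "j < n" for i j
    using that A by (metis carrier_matD index_transpose_mat(1) sym)
  text \<open>The Hermitian form v^* A v is real since A is real symmetric, and it equals a |v|^2.\<close>
  define q where "q = (\<Sum>i<n. \<Sum>j<n. complex_of_real (A $$ (i, j)) * (cnj (v $ i) * v $ j))"
  define s where "s = (\<Sum>i<n. (cmod (v $ i))\<^sup>2)"
  have "q = (\<Sum>i<n. cnj (v $ i) * (Ac *\<^sub>v v) $ i)"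
    unfolding q_def using v A Ac
    by (auto simp: Ac_def scalar_prod_def lessThan_atLeast0 sum_distrib_left ac_simps
        intro!: sum.cong)
  also have "\<dots> = a * complex_of_real s"
    unfolding Av s_def of_real_sum complex_norm_square using v
    by (auto simp: sum_distrib_left ac_simps intro!: sum.cong)
  finally have q_eq: "q = a * complex_of_real s" .
  have "cnj q = (\<Sum>j<n. \<Sum>i<n. complex_of_real (A $$ (j, i)) * (cnj (v $ j) * v $ i))"
    unfolding q_def cnj_sum by (subst sum.swap) (auto simp: A_sym ac_simps intro!: sum.cong)
  then have "q \<in> \<real>"
    unfolding q_def[symmetric] by (simp add: Reals_cnj_iff)
  obtain i where i: "i < n" "v $ i \<noteq> 0"
    using v by (metis carrier_vecD eq_vecI index_zero_vec)
  have "s > 0"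
    unfolding s_def by (rule sum_pos2[of _ i]) (use i in auto)
  then show ?thesis
    using \<open>q \<in> \<real>\<close> q_eq by (simp add: complex_is_Real_iff)
qed

lemma char_poly_real_symmetric_splits:
  fixes A :: "real mat"
  assumes A: "A \<in> carrier_mat n n" and sym: "transpose_mat A = A"
  obtains rs where "char_poly A = (\<Prod>r\<leftarrow>rs. [:- r, 1:])" and "length rs = n"
proof -
  interpret poly_of_real: map_poly_inj_comm_ring_hom complex_of_real ..
  define Ac where "Ac = map_mat complex_of_real A"
  have Ac: "Ac \<in> carrier_mat n n" using A by (simp add: Ac_def)
  obtain as where as: "char_poly Ac = (\<Prod>a\<leftarrow>as. [:- a, 1:])" and len: "length as = n"
    using char_poly_factorized[OF Ac] by blast
  have "a \<in> \<real>" if "a \<in> set as" for a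
  proof -
    have "poly (char_poly Ac) a = 0"
      using that unfolding as by (auto simp: poly_prod_list)
    then show ?thesis
      using real_symmetric_complex_eigenvalue_real[OF A sym] eigenvalue_root_char_poly[OF Ac]
      unfolding Ac_def by blast
  qed
  then have as_real: "as = map (complex_of_real \<circ> Re) as"
    by (simp add: map_idI)
  have "map_poly complex_of_real (char_poly A) = char_poly Ac"
    unfolding Ac_def by (rule of_real_hom.char_poly_hom[OF A, symmetric])
  also have "\<dots> = map_poly complex_of_real (\<Prod>r\<leftarrow>map Re as. [:- r, 1:])"
    unfolding as poly_of_real.hom_prod_list by (subst as_real) (simp add: o_def)
  finally have "char_poly A = (\<Prod>r\<leftarrow>map Re as. [:- r, 1:])"
    using poly_of_real.eq_iff by blast
  with len show ?thesis
    using that[of "map Re as"] by simp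
qed

lemma proots_prod_list_linear_factors:
  "proots (\<Prod>r\<leftarrow>rs. [:- r, 1:]) = mset (rs :: 'a::idom list)"
proof (induction rs)
  case (Cons a rs)
  have "proots ([:- a, 1:] * (\<Prod>r\<leftarrow>rs. [:- r, 1:]))
      = proots [:- a, 1:] + proots (\<Prod>r\<leftarrow>rs. [:- r, 1:])"
    by (rule proots_mult) auto
  then show ?case
    using Cons proots_linear_factor[of "- a"] by simp
qed simp

lemma eigenvalues_desc_real_symmetric:
  assumes A: "A \<in> carrier_mat n n" and sym: "transpose_mat A = A"
  shows "length (eigenvalues_desc A) = n"
    and "sum_list (eigenvalues_desc A) = trace_mat A"
    and "sorted_wrt (\<ge>) (eigenvalues_desc A)"
proof -
  obtain rs where cp: "char_poly A = (\<Prod>r\<leftarrow>rs. [:- r, 1:])" and "length rs = n"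
    using char_poly_real_symmetric_splits[OF A sym] .
  have eig: "eigenvalues_desc A = rev (sort rs)"
    unfolding eigenvalues_desc_def cp proots_prod_list_linear_factors by simp
  show "length (eigenvalues_desc A) = n"
    using \<open>length rs = n\<close> eig by simp
  show "sum_list (eigenvalues_desc A) = trace_mat A"
    unfolding eig trace_mat_eq_sum_list_char_poly_roots[OF A cp]
    by (metis mset_rev mset_sort sum_mset_sum_list)
  show "sorted_wrt (\<ge>) (eigenvalues_desc A)"
    unfolding eig by (simp add: sorted_wrt_rev)
qed

lemma sum_list_take_sorted_desc_ge:
  fixes xs :: "'a::linordered_idom list"
  assumes sorted: "sorted_wrt (\<ge>) xs" and "k \<le> length xs"
  shows "of_nat k * sum_list xs \<le> of_nat (length xs) * sum_list (take k xs)"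
proof -
  define T where "T = take k xs"
  define D where "D = drop k xs"
  have xs: "xs = T @ D" and len_T: "length T = k"
    using \<open>k \<le> length xs\<close> unfolding T_def D_def by simp_all
  have D_le: "sum_list D \<le> of_nat (length D) * x" if "x \<in> set T" for x
  proof -
    have "\<forall>y\<in>set D. y \<le> x"
      using sorted that unfolding xs sorted_wrt_append by blast
    then have "sum_list D \<le> sum_list (map (\<lambda>_. x) D)"
      using sum_list_mono[of D "\<lambda>y. y" "\<lambda>_. x"] by simp
    then show ?thesis by (simp add: sum_list_triv)
  qed
  have "of_nat (length T) * sum_list D = sum_list (map (\<lambda>_. sum_list D) T)"
    by (simp add: sum_list_triv)
  also have "\<dots> \<le> sum_list (map (\<lambda>x. of_nat (length D) * x) T)"
    by (rule sum_list_mono) (use D_le in auto)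
  also have "\<dots> = of_nat (length D) * sum_list T"
    by (simp add: sum_list_const_mult)
  finally show ?thesis
    unfolding T_def[symmetric] using len_T by (simp add: xs algebra_simps)
qed

lemma S_k_real_symmetric_ge_trace:
  assumes "A \<in> carrier_mat n n" and "transpose_mat A = A" and "k \<le> n"
  shows "real k / real n * trace_mat A \<le> S_k k A"
proof (cases "n = 0")
  case True
  then show ?thesis
    using eigenvalues_desc_real_symmetric(1)[OF assms(1,2)] by (simp add: S_k_def)
next
  case False
  then show ?thesis
    using sum_list_take_sorted_desc_ge[of "eigenvalues_desc A" k]
      eigenvalues_desc_real_symmetric[OF assms(1,2)] assms(3)
    by (simp add: S_k_def field_simps)
qed

lemma num_edges_eq_card_increasing_pairs:
  assumes "simple_graph n E"
  shows "num_edges n E = card {(i, j). i < n \<and> j < n \<and> E i j \<and> i < j}"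
proof -
  let ?P = "{(i, j). i < n \<and> j < n \<and> E i j \<and> i < j}"
  have "{{i, j} | i j. i < n \<and> j < n \<and> E i j} \<subseteq> (\<lambda>(i, j). {i, j}) ` ?P"
  proof clarify
    fix i j assume edge: "i < n" "j < n" "E i j"
    with assms have "i \<noteq> j" "E j i"
      unfolding simple_graph_def by auto
    with edge have "(i, j) \<in> ?P \<or> (j, i) \<in> ?P"
      by (cases "i < j") auto
    then show "{i, j} \<in> (\<lambda>(i, j). {i, j}) ` ?P"
      by (auto intro: image_eqI[of _ _ "(j, i)"] image_eqI[of _ _ "(i, j)"])
  qed
  then have "{{i, j} | i j. i < n \<and> j < n \<and> E i j} = (\<lambda>(i, j). {i, j}) ` ?P"
    by auto
  moreover have "inj_on (\<lambda>(i, j). {i, j}) ?P"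
    by (auto simp: inj_on_def doubleton_eq_iff)
  ultimately show ?thesis
    by (simp add: num_edges_def card_image)
qed

lemma sum_degree_eq_twice_num_edges:
  assumes "simple_graph n E"
  shows "(\<Sum>i<n. degree n E i) = 2 * num_edges n E"
proof -
  let ?P = "{(i, j). i < n \<and> j < n \<and> E i j \<and> i < j}"
  have "finite ?P"
    by (rule finite_subset[of _ "{..<n} \<times> {..<n}"]) auto
  have "(\<Sum>i<n. degree n E i) = card (SIGMA i:{..<n}. {j. j < n \<and> E i j})"
    by (simp add: degree_def)
  also have "(SIGMA i:{..<n}. {j. j < n \<and> E i j}) = ?P \<union> prod.swap ` ?P"
  proof (intro equalityI subsetI)
    fix x assume "x \<in> (SIGMA i:{..<n}. {j. j < n \<and> E i j})"
    then obtain i j where x: "x = (i, j)" and edge: "i < n" "j < n" "E i j"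
      by blast
    with assms have "i \<noteq> j" "E j i"
      unfolding simple_graph_def by auto
    with edge show "x \<in> ?P \<union> prod.swap ` ?P"
      unfolding x by (cases "i < j") (auto intro: image_eqI[of _ _ "(j, i)"])
  next
    fix x assume "x \<in> ?P \<union> prod.swap ` ?P"
    with assms show "x \<in> (SIGMA i:{..<n}. {j. j < n \<and> E i j})"
      unfolding simple_graph_def by auto
  qed
  also have "card (?P \<union> prod.swap ` ?P) = card ?P + card (prod.swap ` ?P)"
    using \<open>finite ?P\<close> by (intro card_Un_disjoint) auto
  also have "card (prod.swap ` ?P) = card ?P"
    by (simp add: card_image)
  finally show ?thesis
    using num_edges_eq_card_increasing_pairs[OF assms] by simp
qed

lemma proper_colouring_id:
  assumes "simple_graph n E"
  shows "proper_colouring n E n id"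
  using assms unfolding simple_graph_def proper_colouring_def by auto

lemma chromatic_number_le:
  assumes "simple_graph n E"
  shows "chromatic_number n E \<le> n"
  unfolding chromatic_number_def by (rule Least_le) (use proper_colouring_id[OF assms] in blast)

lemma proper_colouring_chromatic_number:
  assumes "simple_graph n E"
  obtains c where "proper_colouring n E (chromatic_number n E) c"
proof -
  have "\<exists>c. proper_colouring n E (chromatic_number n E) c"
    unfolding chromatic_number_def by (rule LeastI_ex) (use proper_colouring_id[OF assms] in blast)
  with that show ?thesis by blast
qed

lemma card_le_independence_number:
  assumes "independent_set n E S"
  shows "card S \<le> independence_number n E"
proof -
  have "finite {S. independent_set n E S}"
    by (rule finite_subset[of _ "Pow {0..<n}"]) (auto simp: independent_set_def)
  then show ?thesis
    unfolding independence_number_def using assms by (intro Max_ge finite_imageI) auto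
qed

lemma card_le_chromatic_number_mult_independence_number:
  assumes "simple_graph n E"
  shows "n \<le> chromatic_number n E * independence_number n E"
proof -
  let ?\<chi> = "chromatic_number n E"
  obtain c where c: "proper_colouring n E ?\<chi> c"
    using proper_colouring_chromatic_number[OF assms] .
  define colour_class where "colour_class t = {i. i < n \<and> c i = t}" for t
  have "\<not> E i j" if "c i = c j" for i j
    using c that by (auto simp: proper_colouring_def)
  then have independent: "independent_set n E (colour_class t)" for t
    by (auto simp: independent_set_def colour_class_def)
  have "{..<n} = (\<Union>t<?\<chi>. colour_class t)"
    using c unfolding colour_class_def proper_colouring_def by auto
  then have "n = card (\<Union>t<?\<chi>. colour_class t)"
    by (metis card_lessThan)
  also have "\<dots> \<le> (\<Sum>t<?\<chi>. card (colour_class t))"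
    by (rule card_UN_le) simp
  also have "\<dots> \<le> (\<Sum>t<?\<chi>. independence_number n E)"
    by (intro sum_mono card_le_independence_number independent)
  finally show ?thesis by simp
qed

lemma inverse_independence_number_le:
  assumes "simple_graph n E" and "n > 0"
  shows "1 / real (independence_number n E) \<le> real (chromatic_number n E) / real n"
proof -
  have "n \<le> chromatic_number n E * independence_number n E"
    by (rule card_le_chromatic_number_mult_independence_number[OF assms(1)])
  moreover from this have "independence_number n E > 0"
    using \<open>n > 0\<close> by (metis gr0I mult_0_right le_0_eq)
  ultimately show ?thesis
    using \<open>n > 0\<close> by (simp add: field_simps flip: of_nat_mult)
qed

lemma A_alpha_carrier_mat: "A_alpha \<alpha> n E \<in> carrier_mat n n"
  unfolding A_alpha_def deg_matrix_def adj_matrix_def by auto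

lemma A_alpha_index:
  "i < n \<Longrightarrow> j < n \<Longrightarrow> A_alpha \<alpha> n E $$ (i, j) =
     \<alpha> * (if i = j then real (degree n E i) else 0) + (1 - \<alpha>) * (if E i j then 1 else 0)"
  unfolding A_alpha_def deg_matrix_def adj_matrix_def by auto

lemma transpose_A_alpha:
  assumes "simple_graph n E"
  shows "transpose_mat (A_alpha \<alpha> n E) = A_alpha \<alpha> n E"
  using assms A_alpha_carrier_mat[of \<alpha> n E]
  by (intro eq_matI) (auto simp: A_alpha_index simple_graph_def)

lemma trace_A_alpha:
  assumes "simple_graph n E"
  shows "trace_mat (A_alpha \<alpha> n E) = 2 * \<alpha> * real (num_edges n E)"
proof -
  have "trace_mat (A_alpha \<alpha> n E) = (\<Sum>i<n. \<alpha> * real (degree n E i))"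
    using assms A_alpha_carrier_mat[of \<alpha> n E]
    by (auto simp: trace_mat_def A_alpha_index simple_graph_def intro!: sum.cong)
  also have "\<dots> = \<alpha> * real (\<Sum>i<n. degree n E i)"
    by (simp add: sum_distrib_left)
  finally show ?thesis
    by (simp add: sum_degree_eq_twice_num_edges[OF assms])
qed

theorem corollary5p3:
  fixes n :: nat and E :: "nat \<Rightarrow> nat \<Rightarrow> bool" and \<alpha> :: real
  assumes "simple_graph n E"
    and "graph_connected n E"
    and "0 \<le> \<alpha>" and "\<alpha> < 1"
  shows "S_k (chromatic_number n E) (A_alpha \<alpha> n E)
           \<ge> 2 * \<alpha> * real (num_edges n E) / real (independence_number n E)"
proof -
  let ?\<chi> = "chromatic_number n E" and ?m = "num_edges n E" and ?A = "A_alpha \<alpha> n E"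
  have "real ?\<chi> / real n * trace_mat ?A \<le> S_k ?\<chi> ?A"
    using assms(1) by (intro S_k_real_symmetric_ge_trace A_alpha_carrier_mat transpose_A_alpha
        chromatic_number_le)
  then have spectral_bound: "real ?\<chi> / real n * (2 * \<alpha> * real ?m) \<le> S_k ?\<chi> ?A"
    by (simp only: trace_A_alpha[OF assms(1)])
  show ?thesis
  proof (cases "n = 0")
    case True
    then have "?m = 0"
      using sum_degree_eq_twice_num_edges[OF assms(1)] by simp
    with spectral_bound show ?thesis by simp
  next
    case False
    then have "1 / real (independence_number n E) * (2 * \<alpha> * real ?m)
        \<le> real ?\<chi> / real n * (2 * \<alpha> * real ?m)"
      using assms(1,3) by (intro mult_right_mono inverse_independence_number_le) auto
    with spectral_bound show ?thesis by simp
  qed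
qed

end
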